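(* In the situation of the context, assume $\mathfrak C_R \subseteq \mathfrak m^2$ and $a_1 + a_n \ge c_R$. Then $S$ has Herzog–Kunz generators $\widetilde x_1, \ldots, \widetilde x_{n+s}$ (so $S = k[[\widetilde x_1,\ldots,\widetilde x_{n+s}]]$) such that $t^{a_1}, t^{a_n}, t^{b_1}, \ldots, t^{b_s}$ are among the $\widetilde x_j$.
   Context: Let $k$ be an algebraically closed field of characteristic $0$ and let $(R,\mathfrak m)$ be a complete local noetherian domain of dimension $1$ containing $k$ with $R/\mathfrak m = k$; its normalization is $\overline R = k[[t]]$, $R\subseteq k[[t]]$ finite birational. Let $v$ be the $t$-adic valuation; for $A \subseteq k((t))$ let $v(A)=\{v(f): f\in A\setminus\{0\}\}$, and $V(T)=v(T)$ for a ring $T$. The conductor is $\mathfrak C_R=\{x\in\overline R: x\overline R\subseteq R\} = t^{c_R}\overline R$. For any such ring $T$ (with maximal ideal $\mathfrak m_T$), its Herzog–Kunz sequence is $v(\mathfrak m_T)\setminus v(\mathfrak m_T^2)$ listed increasingly, and Herzog–Kunz generators are elements of $T$ having exactly these valuations (they generate $T$ as $k[[\cdot]]$, the image of a power series ring). Let $a_1<\cdots<a_n$ be the Herzog–Kunz sequence of $R$ and $x_1,\ldots,x_n$ Herzog–Kunz generators of $R$ with $x_1 = t^{a_1}$. Let $S = R[\mathfrak C_R/x_1]$ and let $b_1<\cdots<b_s$ be the elements of $\{c_R-a_1, \ldots, c_R-1\}$ not in $V(R)$. Known facts (used as given): $S = R[t^{b_1},\ldots,t^{b_s}]$, $c_S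 = c_R - a_1$, and $\mathrm{edim}(S) = n+s$. *)

theory Defs
  imports "HOL-Computational_Algebra.Computational_Algebra"
begin

text \<open>Setting: k is a field (type 'a) of characteristic 0, algebraically closed;
  the normalization k[[t]] is the type 'a fps, t = fps_X, and v = subdegree.\<close>

definition alg_closed_field :: "'a::field itself \<Rightarrow> bool" where
  "alg_closed_field _ \<longleftrightarrow> (\<forall>p :: 'a poly. degree p > 0 \<longrightarrow> (\<exists>x. poly p x = 0))"

definition k_subalg :: "'a::field fps set \<Rightarrow> bool" where
  "k_subalg T \<longleftrightarrow> (\<forall>c. fps_const c \<in> T) \<and>
     (\<forall>f\<in>T. \<forall>g\<in>T. f + g \<in> T \<and> f * g \<in> T) \<and> (\<forall>f\<in>T. - f \<in> T)"

text \<open>A complete local one-dimensional domain R with k \<subseteq> R \<subseteq> k[[t]], residue field k,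
  and k[[t]] finite birational over R: equivalently a k-subalgebra of k[[t]] with
  nonzero conductor (i.e. containing t^c k[[t]] for some c).\<close>
definition curve_ring :: "'a::field fps set \<Rightarrow> bool" where
  "curve_ring R \<longleftrightarrow> k_subalg R \<and> (\<exists>c. \<forall>g. fps_X ^ c * g \<in> R)"

definition vals :: "'a::field fps set \<Rightarrow> nat set" where
  "vals A = subdegree ` (A - {0})"

definition max_ideal :: "'a::field fps set \<Rightarrow> 'a fps set" where
  "max_ideal T = {f \<in> T. fps_nth f 0 = 0}"

definition max_ideal_sq :: "'a::field fps set \<Rightarrow> 'a fps set" where
  "max_ideal_sq T = {sum_list (map (\<lambda>(a, b). a * b) ps) | ps.
       set ps \<subseteq> max_ideal T \<times> max_ideal T}"

definition HK_seq :: "'a::field fps set \<Rightarrow> nat list" where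
  "HK_seq T = sorted_list_of_set (vals (max_ideal T) - vals (max_ideal_sq T))"

definition HK_gens :: "'a::field fps set \<Rightarrow> 'a fps list \<Rightarrow> bool" where
  "HK_gens T xs \<longleftrightarrow> set xs \<subseteq> T \<and> 0 \<notin> set xs \<and> map subdegree xs = HK_seq T"

definition conductor :: "'a::field fps set \<Rightarrow> 'a fps set" where
  "conductor R = {x. \<forall>y. x * y \<in> R}"

definition cond_exp :: "'a::field fps set \<Rightarrow> nat" where
  "cond_exp R = (LEAST c. fps_X ^ c \<in> conductor R)"

definition gen_subalg :: "'a::field fps set \<Rightarrow> 'a fps set" where
  "gen_subalg A = \<Inter> {T. k_subalg T \<and> A \<subseteq> T}"

text \<open>S = R[C_R / x_1] with x_1 = t^{a_1}.\<close>
definition blowup_ring :: "'a::field fps set \<Rightarrow> nat \<Rightarrow> 'a fps set" where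
  "blowup_ring R a1 = gen_subalg (R \<union> {g. g * fps_X ^ a1 \<in> conductor R})"

end

theory Submission
  imports Defs "HOL-Library.Set_Algebras"
begin

(* The conductor is t^c k[[t]]. Since C_R \<subseteq> m_R^2, every Herzog-Kunz valuation of R is
   below c, and the least one, a_1, satisfies m_R \<subseteq> t^(a_1) k[[t]]; from t^c \<in> m_R^2 we get
   2 a_1 \<le> c. Hence S = R + t^(c - a_1) k[[t]], and every product in m_S^2 that is not a
   product of two elements of m_R lies in t^(a_1) t^(c - a_1) k[[t]] = C_R \<subseteq> m_R^2. So
   m_S^2 = m_R^2, and the Herzog-Kunz valuations of S are those of R together with the b_j.
   As t^(a_1), t^(a_n) (because a_n \<ge> c - a_1) and all t^(b_j) lie in S, each of these
   monomials can serve as the generator of its own valuation. *)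

definition fps_X_ideal :: "nat \<Rightarrow> 'a::field fps set" where
  "fps_X_ideal k = {f. fps_X ^ k dvd f}"

lemma fps_X_ideal_iff_subdegree:
  "f \<in> fps_X_ideal k \<longleftrightarrow> f = 0 \<or> k \<le> subdegree f"
  by (cases "f = 0") (simp_all add: fps_X_ideal_def fps_dvd_iff fps_X_power_subdegree)

lemma fps_X_power_in_fps_X_ideal_iff [simp]:
  "(fps_X ^ h :: 'a::field fps) \<in> fps_X_ideal k \<longleftrightarrow> k \<le> h"
  by (simp add: fps_X_ideal_iff_subdegree fps_X_power_subdegree)

lemma zero_in_fps_X_ideal [simp]: "0 \<in> fps_X_ideal k"
  by (simp add: fps_X_ideal_def)

lemma fps_X_ideal_add: "f \<in> fps_X_ideal k \<Longrightarrow> g \<in> fps_X_ideal k \<Longrightarrow> f + g \<in> fps_X_ideal k"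
  by (simp add: fps_X_ideal_def)

lemma fps_X_ideal_uminus: "f \<in> fps_X_ideal k \<Longrightarrow> - f \<in> fps_X_ideal k"
  by (simp add: fps_X_ideal_def)

lemma fps_X_ideal_mult_left: "g \<in> fps_X_ideal k \<Longrightarrow> f * g \<in> fps_X_ideal k"
  by (simp add: fps_X_ideal_def)

lemma fps_X_ideal_mult:
  "f \<in> fps_X_ideal k \<Longrightarrow> g \<in> fps_X_ideal j \<Longrightarrow> f * g \<in> fps_X_ideal (k + j)"
  by (simp add: fps_X_ideal_def power_add mult_dvd_mono)

lemma fps_X_ideal_antimono: "j \<le> k \<Longrightarrow> fps_X_ideal k \<subseteq> fps_X_ideal j"
  by (auto simp: fps_X_ideal_def intro: dvd_trans le_imp_power_dvd)

lemma fps_X_ideal_nth_0: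
  assumes "1 \<le> k" and "f \<in> fps_X_ideal k"
  shows "f $ 0 = 0"
proof (cases "f = 0")
  case False
  with assms have "0 < subdegree f"
    by (simp add: fps_X_ideal_iff_subdegree)
  then show ?thesis
    by (rule nth_less_subdegree_zero)
qed simp

lemma max_ideal_subset: "max_ideal T \<subseteq> T"
  by (auto simp: max_ideal_def)

lemma vals_mono: "A \<subseteq> B \<Longrightarrow> vals A \<subseteq> vals B"
  unfolding vals_def by blast

lemma valsI: "f \<in> A \<Longrightarrow> f \<noteq> 0 \<Longrightarrow> subdegree f = h \<Longrightarrow> h \<in> vals A"
  unfolding vals_def by blast

lemma vals_fps_X_power: "(fps_X ^ h :: 'a::field fps) \<in> A \<Longrightarrow> h \<in> vals A"
  using valsI[of "fps_X ^ h" A h] by (simp add: fps_X_power_subdegree)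

lemma vals_max_ideal: "vals (max_ideal T) = vals T - {0}"
  by (auto simp: vals_def max_ideal_def subdegree_eq_0_iff image_iff)

lemma zero_in_k_subalg: "k_subalg T \<Longrightarrow> 0 \<in> T"
  unfolding k_subalg_def by (metis fps_const_0_eq_0)

lemma max_ideal_sq_induct [consumes 1, case_names zero add mult]:
  assumes "x \<in> max_ideal_sq T"
    and "P 0"
    and "\<And>x y. P x \<Longrightarrow> P y \<Longrightarrow> P (x + y)"
    and "\<And>a b. a \<in> max_ideal T \<Longrightarrow> b \<in> max_ideal T \<Longrightarrow> P (a * b)"
  shows "P x"
proof -
  obtain ps where x: "x = sum_list (map (\<lambda>(a, b). a * b) ps)"
    and ps: "set ps \<subseteq> max_ideal T \<times> max_ideal T"
    using assms(1) by (auto simp: max_ideal_sq_def)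
  from ps have "P (sum_list (map (\<lambda>(a, b). a * b) ps))"
    by (induction ps) (auto intro: assms(2-4))
  then show ?thesis by (simp add: x)
qed

lemma zero_in_max_ideal_sq: "0 \<in> max_ideal_sq T"
  unfolding max_ideal_sq_def by (rule CollectI, rule exI[of _ "[]"]) simp

lemma max_ideal_sq_add:
  "x \<in> max_ideal_sq T \<Longrightarrow> y \<in> max_ideal_sq T \<Longrightarrow> x + y \<in> max_ideal_sq T"
  unfolding max_ideal_sq_def by clarify (rule exI[of _ "_ @ _"], auto)

lemma mult_in_max_ideal_sq:
  "a \<in> max_ideal T \<Longrightarrow> b \<in> max_ideal T \<Longrightarrow> a * b \<in> max_ideal_sq T"
  unfolding max_ideal_sq_def by (rule CollectI, rule exI[of _ "[(a, b)]"]) simp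

lemma max_ideal_sq_mono: "max_ideal A \<subseteq> max_ideal B \<Longrightarrow> max_ideal_sq A \<subseteq> max_ideal_sq B"
  unfolding max_ideal_sq_def by blast

lemma max_ideal_sq_subset:
  assumes "k_subalg T"
  shows "max_ideal_sq T \<subseteq> T"
proof
  fix x assume "x \<in> max_ideal_sq T"
  then show "x \<in> T"
  proof (induction rule: max_ideal_sq_induct)
    case zero
    show ?case using assms by (rule zero_in_k_subalg)
  qed (use assms in \<open>auto simp: k_subalg_def max_ideal_def\<close>)
qed

lemma max_ideal_sq_subset_fps_X_ideal:
  assumes "max_ideal T \<subseteq> fps_X_ideal k"
  shows "max_ideal_sq T \<subseteq> fps_X_ideal (2 * k)"
proof
  fix x assume "x \<in> max_ideal_sq T"
  then show "x \<in> fps_X_ideal (2 * k)"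
    by (induction rule: max_ideal_sq_induct)
      (use assms in \<open>auto simp: mult_2 intro: fps_X_ideal_add fps_X_ideal_mult\<close>)
qed

lemma conductor_dvd_closed: "x \<in> conductor R \<Longrightarrow> x dvd y \<Longrightarrow> y \<in> conductor R"
  by (auto simp: conductor_def mult.assoc)

lemma conductor_eq_fps_X_ideal:
  assumes "\<exists>c. \<forall>g. fps_X ^ c * g \<in> R"
  shows "conductor R = fps_X_ideal (cond_exp R)"
proof
  have "\<exists>c. fps_X ^ c \<in> conductor R"
    using assms by (simp add: conductor_def)
  then have "fps_X ^ cond_exp R \<in> conductor R"
    unfolding cond_exp_def by (rule LeastI_ex)
  then show "fps_X_ideal (cond_exp R) \<subseteq> conductor R"
    by (auto simp: fps_X_ideal_def intro: conductor_dvd_closed)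
next
  show "conductor R \<subseteq> fps_X_ideal (cond_exp R)"
  proof
    fix x assume x: "x \<in> conductor R"
    show "x \<in> fps_X_ideal (cond_exp R)"
    proof (cases "x = 0")
      case False
      then have "x dvd fps_X ^ subdegree x"
        by (simp add: fps_dvd_iff fps_X_power_subdegree)
      with x have "fps_X ^ subdegree x \<in> conductor R"
        by (rule conductor_dvd_closed)
      then have "cond_exp R \<le> subdegree x"
        unfolding cond_exp_def by (rule Least_le)
      then show ?thesis by (simp add: fps_X_ideal_iff_subdegree)
    qed simp
  qed
qed

lemma conductor_quotient_fps_X_power:
  assumes "\<exists>c. \<forall>g. fps_X ^ c * g \<in> R" and "a \<le> cond_exp R"
  shows "{g. g * fps_X ^ a \<in> conductor R} = fps_X_ideal (cond_exp R - a)"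
proof -
  have "fps_X ^ cond_exp R = fps_X ^ (cond_exp R - a) * (fps_X ^ a :: 'a fps)"
    using assms(2) by (metis le_add_diff_inverse2 power_add)
  then show ?thesis
    unfolding conductor_eq_fps_X_ideal[OF assms(1)] fps_X_ideal_def
    by (simp only: mem_Collect_eq dvd_times_right_cancel_iff power_not_zero fps_X_neq_zero
        not_False_eq_True)
qed

lemma k_subalg_plus_fps_X_ideal:
  assumes "k_subalg R"
  shows "k_subalg (R + fps_X_ideal d)"
  unfolding k_subalg_def
proof (intro conjI allI ballI)
  fix c
  have "fps_const c + 0 \<in> R + fps_X_ideal d"
    using assms by (intro set_plus_intro) (auto simp: k_subalg_def)
  then show "fps_const c \<in> R + fps_X_ideal d" by simp
next
  fix f g assume "f \<in> R + fps_X_ideal d" "g \<in> R + fps_X_ideal d"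
  then obtain r1 g1 r2 g2 where f: "f = r1 + g1" "r1 \<in> R" "g1 \<in> fps_X_ideal d"
    and g: "g = r2 + g2" "r2 \<in> R" "g2 \<in> fps_X_ideal d"
    by (auto elim!: set_plus_elim)
  have "(r1 + r2) + (g1 + g2) \<in> R + fps_X_ideal d"
    using assms f g by (intro set_plus_intro fps_X_ideal_add) (auto simp: k_subalg_def)
  then show "f + g \<in> R + fps_X_ideal d"
    by (simp add: f g algebra_simps)
  have "g1 * g \<in> fps_X_ideal d"
    using fps_X_ideal_mult_left[OF f(3), of g] by (simp add: mult.commute)
  then have "r1 * r2 + (r1 * g2 + g1 * g) \<in> R + fps_X_ideal d"
    using assms f g
    by (intro set_plus_intro fps_X_ideal_add) (auto simp: k_subalg_def fps_X_ideal_mult_left)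
  then show "f * g \<in> R + fps_X_ideal d"
    by (simp add: f g algebra_simps)
next
  fix f assume "f \<in> R + fps_X_ideal d"
  then obtain r g where "f = r + g" "r \<in> R" "g \<in> fps_X_ideal d"
    by (auto elim!: set_plus_elim)
  then show "- f \<in> R + fps_X_ideal d"
    using assms by (auto simp: k_subalg_def intro!: set_plus_intro[of "- r" _ "- g", simplified]
        fps_X_ideal_uminus)
qed

lemma subset_plus_fps_X_ideal: "R \<subseteq> R + fps_X_ideal d"
  using set_plus_intro[of _ R 0 "fps_X_ideal d"] by auto

lemma fps_X_ideal_subset_plus: "k_subalg R \<Longrightarrow> fps_X_ideal d \<subseteq> R + fps_X_ideal d"
  using set_plus_intro[of 0 R _ "fps_X_ideal d"] zero_in_k_subalg by fastforce

lemma gen_subalg_Un_fps_X_ideal: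
  assumes "k_subalg R"
  shows "gen_subalg (R \<union> fps_X_ideal d) = R + fps_X_ideal d"
proof
  show "gen_subalg (R \<union> fps_X_ideal d) \<subseteq> R + fps_X_ideal d"
    using k_subalg_plus_fps_X_ideal[OF assms] subset_plus_fps_X_ideal[of R d]
      fps_X_ideal_subset_plus[OF assms, of d]
    unfolding gen_subalg_def by blast
next
  show "R + fps_X_ideal d \<subseteq> gen_subalg (R \<union> fps_X_ideal d)"
    unfolding gen_subalg_def k_subalg_def by (blast elim: set_plus_elim)
qed

lemma blowup_ring_eq:
  assumes "curve_ring R" and "a \<le> cond_exp R"
  shows "blowup_ring R a = R + fps_X_ideal (cond_exp R - a)"
  using assms conductor_quotient_fps_X_power[of R a]
  by (simp add: blowup_ring_def curve_ring_def gen_subalg_Un_fps_X_ideal)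

definition HK_set :: "'a::field fps set \<Rightarrow> nat set" where
  "HK_set T = vals (max_ideal T) - vals (max_ideal_sq T)"

lemma set_HK_seq: "finite (HK_set T) \<Longrightarrow> set (HK_seq T) = HK_set T"
  by (simp add: HK_seq_def HK_set_def)

lemma length_HK_seq: "finite (HK_set T) \<Longrightarrow> length (HK_seq T) = card (HK_set T)"
  by (simp add: HK_seq_def HK_set_def)

lemma hd_HK_seq: "finite (HK_set T) \<Longrightarrow> HK_seq T \<noteq> [] \<Longrightarrow> hd (HK_seq T) = Min (HK_set T)"
  by (auto simp: HK_seq_def HK_set_def sorted_list_of_set_nonempty)

lemma finite_HK_set:
  assumes "fps_X_ideal c \<subseteq> max_ideal_sq T"
  shows "finite (HK_set T)"
proof -
  have "HK_set T \<subseteq> {..<c}"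
  proof
    fix h assume h: "h \<in> HK_set T"
    show "h \<in> {..<c}"
    proof (rule ccontr)
      assume "h \<notin> {..<c}"
      then have "h \<in> vals (max_ideal_sq T)"
        using assms by (intro vals_fps_X_power) auto
      with h show False by (simp add: HK_set_def)
    qed
  qed
  then show ?thesis
    using finite_subset by blast
qed

lemma hd_HK_seq_in_HK_set: "finite (HK_set T) \<Longrightarrow> HK_seq T \<noteq> [] \<Longrightarrow> hd (HK_seq T) \<in> HK_set T"
  using hd_in_set[of "HK_seq T"] set_HK_seq[of T] by simp

lemma last_HK_seq_in_HK_set:
  "finite (HK_set T) \<Longrightarrow> HK_seq T \<noteq> [] \<Longrightarrow> last (HK_seq T) \<in> HK_set T"
  using last_in_set[of "HK_seq T"] set_HK_seq[of T] by simp

lemma HK_set_subset_vals: "HK_set T \<subseteq> vals T"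
  using vals_mono[OF max_ideal_subset] by (auto simp: HK_set_def)

lemma HK_set_pos: "h \<in> HK_set T \<Longrightarrow> 1 \<le> h"
  by (auto simp: HK_set_def vals_max_ideal)

lemma max_ideal_subset_fps_X_ideal_hd_HK_seq:
  assumes "finite (HK_set T)" and "HK_seq T \<noteq> []"
  shows "max_ideal T \<subseteq> fps_X_ideal (hd (HK_seq T))"
proof -
  define m where "m = (LEAST v. v \<in> vals (max_ideal T))"
  have "vals (max_ideal T) \<noteq> {}"
    using hd_HK_seq_in_HK_set[OF assms] by (auto simp: HK_set_def)
  then have m: "m \<in> vals (max_ideal T)"
    unfolding m_def by (auto intro: LeastI)
  have mT: "max_ideal T \<subseteq> fps_X_ideal m"
    by (auto simp: fps_X_ideal_iff_subdegree m_def intro!: Least_le valsI)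
  have "m \<notin> vals (max_ideal_sq T)"
  proof
    assume "m \<in> vals (max_ideal_sq T)"
    then have "2 * m \<le> m"
      using max_ideal_sq_subset_fps_X_ideal[OF mT] by (auto simp: vals_def fps_X_ideal_iff_subdegree)
    moreover have "1 \<le> m"
      using m by (simp add: vals_max_ideal)
    ultimately show False by simp
  qed
  with m have "hd (HK_seq T) \<le> m"
    using assms by (simp add: HK_set_def hd_HK_seq)
  with mT show ?thesis
    using fps_X_ideal_antimono by blast
qed

lemma max_ideal_plus_fps_X_ideal:
  assumes "1 \<le> d"
  shows "max_ideal (R + fps_X_ideal d) = max_ideal R + fps_X_ideal d"
  using fps_X_ideal_nth_0[OF assms]
  by (fastforce simp: max_ideal_def elim!: set_plus_elim)

lemma max_ideal_subset_max_ideal_plus: "max_ideal R \<subseteq> max_ideal (R + fps_X_ideal d)"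
  using set_plus_intro[of _ R 0 "fps_X_ideal d"] by (auto simp: max_ideal_def)

lemma max_ideal_sq_plus_fps_X_ideal:
  assumes "max_ideal R \<subseteq> fps_X_ideal a" and "1 \<le> a" and "a \<le> d"
    and "fps_X_ideal (a + d) \<subseteq> max_ideal_sq R"
  shows "max_ideal_sq (R + fps_X_ideal d) = max_ideal_sq R"
proof
  show "max_ideal_sq R \<subseteq> max_ideal_sq (R + fps_X_ideal d)"
    by (rule max_ideal_sq_mono[OF max_ideal_subset_max_ideal_plus])
next
  have max_ideal_S: "max_ideal (R + fps_X_ideal d) = max_ideal R + fps_X_ideal d"
    using assms(2,3) by (simp add: max_ideal_plus_fps_X_ideal)
  show "max_ideal_sq (R + fps_X_ideal d) \<subseteq> max_ideal_sq R"
  proof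
    fix x assume "x \<in> max_ideal_sq (R + fps_X_ideal d)"
    then show "x \<in> max_ideal_sq R"
    proof (induction rule: max_ideal_sq_induct)
      case zero
      show ?case by (rule zero_in_max_ideal_sq)
    next
      case (add x y)
      then show ?case by (rule max_ideal_sq_add)
    next
      case (mult f g)
      then obtain r1 g1 r2 g2
        where f: "f = r1 + g1" "r1 \<in> max_ideal R" "g1 \<in> fps_X_ideal d"
          and g: "g = r2 + g2" "r2 \<in> max_ideal R" "g2 \<in> fps_X_ideal d"
        by (auto simp: max_ideal_S elim!: set_plus_elim)
      have "g \<in> fps_X_ideal a"
        using g assms(1,3) fps_X_ideal_antimono[of a d] by (auto intro: fps_X_ideal_add)
      then have "g1 * g \<in> fps_X_ideal (a + d)"
        using fps_X_ideal_mult[OF f(3)] by (simp add: add.commute)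
      moreover have "r1 * g2 \<in> fps_X_ideal (a + d)"
        using f(2) g(3) assms(1) by (blast intro: fps_X_ideal_mult)
      ultimately have "r1 * g2 + g1 * g \<in> fps_X_ideal (a + d)"
        by (rule fps_X_ideal_add[rotated])
      then have "r1 * r2 + (r1 * g2 + g1 * g) \<in> max_ideal_sq R"
        using f g assms(4) by (auto intro: max_ideal_sq_add mult_in_max_ideal_sq)
      then show ?case
        by (simp add: f g algebra_simps)
    qed
  qed
qed

lemma vals_plus_fps_X_ideal_below:
  assumes "h \<in> vals (R + fps_X_ideal d)" and "h < d"
  shows "h \<in> vals R"
proof -
  obtain r g where f: "r + g \<noteq> 0" "subdegree (r + g) = h" "r \<in> R" "g \<in> fps_X_ideal d"
    using assms(1) by (auto simp: vals_def elim!: set_plus_elim)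
  show ?thesis
  proof (cases "g = 0")
    case False
    then have "h < subdegree (- g)"
      using f(4) assms(2) by (simp add: fps_X_ideal_iff_subdegree)
    then have "subdegree r = h"
      using subdegree_add_eq1[OF f(1), of "- g"] f(2) by simp
    moreover have "r \<noteq> 0"
      using f False assms(2) by (auto simp: fps_X_ideal_iff_subdegree)
    ultimately show ?thesis
      using f(3) valsI by blast
  qed (use f in \<open>auto intro: valsI\<close>)
qed

lemma HK_set_plus_fps_X_ideal:
  assumes "k_subalg R" and "max_ideal R \<subseteq> fps_X_ideal a" and "1 \<le> a" and "a \<le> d"
    and "fps_X_ideal (a + d) \<subseteq> max_ideal_sq R"
  shows "HK_set (R + fps_X_ideal d) = HK_set R \<union> ({d..<a + d} - vals R)"
    (is "HK_set ?S = _")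
proof -
  have sq: "max_ideal_sq ?S = max_ideal_sq R"
    using assms(2-5) by (rule max_ideal_sq_plus_fps_X_ideal)
  have max_ideal_S: "max_ideal ?S = max_ideal R + fps_X_ideal d"
    using assms(3,4) by (simp add: max_ideal_plus_fps_X_ideal)
  have "0 \<in> max_ideal R"
    using zero_in_k_subalg[OF assms(1)] by (simp add: max_ideal_def)
  have high: "h \<in> vals (max_ideal ?S)" if "d \<le> h" for h
  proof (rule vals_fps_X_power)
    have "0 + fps_X ^ h \<in> max_ideal ?S"
      unfolding max_ideal_S using \<open>0 \<in> max_ideal R\<close> that by (intro set_plus_intro) simp_all
    then show "fps_X ^ h \<in> max_ideal ?S" by simp
  qed
  have sq_high: "h \<in> vals (max_ideal_sq R)" if "a + d \<le> h" for h
    using that assms(5) by (intro vals_fps_X_power) auto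
  have low: "h \<in> vals R" if "h \<in> vals (max_ideal ?S)" "h < d" for h
    using that vals_mono[OF max_ideal_subset] by (blast intro: vals_plus_fps_X_ideal_below)
  have "vals (max_ideal R) \<subseteq> vals (max_ideal ?S)"
    by (rule vals_mono[OF max_ideal_subset_max_ideal_plus])
  moreover have "vals (max_ideal_sq R) \<subseteq> vals R"
    using max_ideal_sq_subset[OF assms(1)] by (rule vals_mono)
  ultimately show ?thesis
    using high sq_high low assms(3,4) unfolding HK_set_def sq vals_max_ideal
    by (auto simp: not_less)
qed

lemma HK_gens_containing_monomials:
  assumes "finite (HK_set T)"
  obtains xs where "HK_gens T xs"
    and "\<And>h. h \<in> HK_set T \<Longrightarrow> fps_X ^ h \<in> T \<Longrightarrow> fps_X ^ h \<in> set xs"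
proof -
  have "\<exists>g. g \<in> T \<and> g \<noteq> 0 \<and> subdegree g = h" if "h \<in> HK_set T" for h
    using that by (auto simp: HK_set_def vals_def max_ideal_def)
  then obtain pick where pick: "\<And>h. h \<in> HK_set T \<Longrightarrow> pick h \<in> T \<and> pick h \<noteq> 0 \<and> subdegree (pick h) = h"
    by metis
  define gen where "gen h = (if fps_X ^ h \<in> T then fps_X ^ h else pick h)" for h
  have gen: "gen h \<in> T \<and> gen h \<noteq> 0 \<and> subdegree (gen h) = h" if "h \<in> HK_set T" for h
    using pick[OF that] by (simp add: gen_def fps_X_power_subdegree)
  show ?thesis
  proof
    show "HK_gens T (map gen (HK_seq T))"
      using gen by (auto simp: HK_gens_def set_HK_seq[OF assms] intro!: map_idI)
    show "fps_X ^ h \<in> set (map gen (HK_seq T))" if "h \<in> HK_set T" "fps_X ^ h \<in> T" for h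
      using that by (auto simp: set_HK_seq[OF assms] gen_def intro!: image_eqI[of _ gen h])
  qed
qed

lemma two_hd_HK_seq_le_cond_exp:
  assumes "curve_ring R" and "conductor R \<subseteq> max_ideal_sq R" and "HK_seq R \<noteq> []"
  shows "2 * hd (HK_seq R) \<le> cond_exp R"
proof -
  have cond: "conductor R = fps_X_ideal (cond_exp R)"
    using assms(1) by (simp add: curve_ring_def conductor_eq_fps_X_ideal)
  then have "finite (HK_set R)"
    using assms(2) by (intro finite_HK_set) simp
  then have "max_ideal_sq R \<subseteq> fps_X_ideal (2 * hd (HK_seq R))"
    using assms(3) max_ideal_subset_fps_X_ideal_hd_HK_seq max_ideal_sq_subset_fps_X_ideal by blast
  moreover have "fps_X ^ cond_exp R \<in> max_ideal_sq R"
    using assms(2) cond by auto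
  ultimately have "(fps_X ^ cond_exp R :: 'a fps) \<in> fps_X_ideal (2 * hd (HK_seq R))"
    by blast
  then show ?thesis by simp
qed

lemma HK_set_blowup_ring:
  assumes "curve_ring R" and "conductor R \<subseteq> max_ideal_sq R" and "HK_seq R \<noteq> []"
  defines "a \<equiv> hd (HK_seq R)" and "c \<equiv> cond_exp R"
  shows "HK_set (blowup_ring R a) = HK_set R \<union> ({c - a..<c} - vals R)"
proof -
  have cond: "conductor R = fps_X_ideal c"
    using assms(1) by (simp add: curve_ring_def c_def conductor_eq_fps_X_ideal)
  have fin: "finite (HK_set R)"
    using assms(2) cond by (intro finite_HK_set) simp
  have "a \<le> c - a"
    using two_hd_HK_seq_le_cond_exp[OF assms(1-3)] by (simp add: a_def c_def)
  moreover have "1 \<le> a"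
    unfolding a_def by (rule HK_set_pos[OF hd_HK_seq_in_HK_set[OF fin assms(3)]])
  moreover have "k_subalg R"
    using assms(1) by (simp add: curve_ring_def)
  moreover have "max_ideal R \<subseteq> fps_X_ideal a"
    unfolding a_def using fin assms(3) by (rule max_ideal_subset_fps_X_ideal_hd_HK_seq)
  moreover have "fps_X_ideal (a + (c - a)) \<subseteq> max_ideal_sq R"
    using \<open>a \<le> c - a\<close> assms(2) cond by simp
  ultimately show ?thesis
    using assms(1) HK_set_plus_fps_X_ideal[of R a "c - a"]
    by (simp add: blowup_ring_eq a_def c_def)
qed

theorem mainTheorem12:
  fixes R :: "'a::field_char_0 fps set"
  assumes "alg_closed_field TYPE('a)"
    and "curve_ring R"
    and "conductor R \<subseteq> max_ideal_sq R"
    and "HK_seq R \<noteq> []"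
    and "fps_X ^ hd (HK_seq R) \<in> R"
    and "hd (HK_seq R) + last (HK_seq R) \<ge> cond_exp R"
  shows "\<exists>xs. HK_gens (blowup_ring R (hd (HK_seq R))) xs
           \<and> length xs = length (HK_seq R)
                + card ({cond_exp R - hd (HK_seq R) ..< cond_exp R} - vals R)
           \<and> fps_X ^ hd (HK_seq R) \<in> set xs
           \<and> fps_X ^ last (HK_seq R) \<in> set xs
           \<and> (\<forall>b \<in> {cond_exp R - hd (HK_seq R) ..< cond_exp R} - vals R.
                 fps_X ^ b \<in> set xs)"
proof -
  define a where "a = hd (HK_seq R)"
  define c where "c = cond_exp R"
  define B where "B = {c - a..<c} - vals R"
  define S where "S = blowup_ring R a"
  have fin: "finite (HK_set R)"
    using assms(2,3) by (intro finite_HK_set) (simp add: curve_ring_def conductor_eq_fps_X_ideal)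
  have HK_S: "HK_set S = HK_set R \<union> B"
    using HK_set_blowup_ring[OF assms(2-4)] by (simp add: S_def B_def a_def c_def)
  have "2 * a \<le> c"
    using two_hd_HK_seq_le_cond_exp[OF assms(2-4)] by (simp add: a_def c_def)
  then have S: "S = R + fps_X_ideal (c - a)"
    using assms(2) by (simp add: S_def c_def blowup_ring_eq)
  have "R \<subseteq> S" and "fps_X_ideal (c - a) \<subseteq> S"
    using assms(2) by (simp_all add: S subset_plus_fps_X_ideal fps_X_ideal_subset_plus curve_ring_def)
  then have monomial_in_S: "fps_X ^ h \<in> S" if "h = a \<or> c - a \<le> h" for h
    using that assms(5) by (auto simp: a_def)
  obtain xs where xs: "HK_gens S xs"
    and monomial_in_xs: "\<And>h. h \<in> HK_set S \<Longrightarrow> fps_X ^ h \<in> S \<Longrightarrow> fps_X ^ h \<in> set xs"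
    using HK_gens_containing_monomials[of S] fin by (auto simp: HK_S B_def)
  have "card (HK_set S) = card (HK_set R) + card B"
    unfolding HK_S using fin HK_set_subset_vals[of R] by (intro card_Un_disjoint) (auto simp: B_def)
  then have "length xs = length (HK_seq R) + card B"
    using xs fin by (simp add: HK_gens_def length_HK_seq HK_S B_def flip: length_map[of subdegree])
  moreover have "a \<in> HK_set R" and "last (HK_seq R) \<in> HK_set R"
    using fin assms(4) by (simp_all add: a_def hd_HK_seq_in_HK_set last_HK_seq_in_HK_set)
  then have "fps_X ^ h \<in> set xs" if "h \<in> {a, last (HK_seq R)} \<union> B" for h
    using that assms(6) by (intro monomial_in_xs monomial_in_S) (auto simp: HK_S B_def a_def c_def)
  ultimately show ?thesis
    using xs unfolding a_def c_def B_def S_def by blast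
qed

end
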